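(* Let $G=(V_G,E_G)$ and $H=(V_H,E_H)$ be graphs on $n$ vertices with partitions $V_G=L_G\cup R_G$, $V_H=L_H\cup R_H$ into sets of size $n/2$, let $\alpha\ge1$ be a constant, let $d=\max\{2|E_H|/n,\ C\log^3 n\}$ for a sufficiently large constant $C$, and let $V_G^{<\alpha d}=\{u\in V_G:\deg(u,G)<\alpha d\}$. Suppose $|V_G^{<\alpha d}|\ge n/\alpha$. Let $\pi$ be uniformly random in $\Pi_{LR}$ and $F=G\boxplus_\pi H$. Consider the algorithm that sorts the vertices of $F$ by their degree in $F$, lets $L'$ be the $\lceil n/(3\alpha)\rceil$ vertices of smallest degree and $R'=V_F\setminus L'$, and outputs $(L',R')$. Then $(L',R')$ is a $\Theta(1)$-balanced cut, and with high probability (over $\pi$) the number of edges of $F$ between $L'$ and $R'$ is $O(dn)$.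
   Context: $\Pi_{LR}$ is the set of bijections $\pi:V_H\to V_G$ with $\pi(L_H)=L_G$, $\pi(R_H)=R_G$. $F=G\boxplus_\pi H$ is the graph on $V_G$ with edge set $E_G\cup\{(\pi(x),\pi(y)):(x,y)\in E_H\}$. A cut $(S,T)$ is $b$-balanced if $|S|,|T|\ge bn$; $\Theta(1)$-balanced means $b$-balanced for some constant $b>0$ (depending only on $\alpha$). *)

theory Defs
  imports "HOL-Probability.Probability"
begin

text \<open>Simple undirected graphs on a finite vertex set V (of naturals), edges as a
symmetric irreflexive relation E with E \<subseteq> V \<times> V. Each undirected edge appears as
both (u,v) and (v,u).\<close>

definition simple_graph :: "nat set \<Rightarrow> (nat \<times> nat) set \<Rightarrow> bool" where
  "simple_graph V E \<longleftrightarrow> finite V \<and> E \<subseteq> V \<times> V \<and> sym E \<and> irrefl E"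

definition num_edges :: "(nat \<times> nat) set \<Rightarrow> nat" where
  "num_edges E = card E div 2"

definition deg :: "(nat \<times> nat) set \<Rightarrow> nat \<Rightarrow> nat" where
  "deg E u = card {v. (u, v) \<in> E}"

definition half_partition :: "nat set \<Rightarrow> nat set \<Rightarrow> nat set \<Rightarrow> bool" where
  "half_partition V L R \<longleftrightarrow> L \<union> R = V \<and> L \<inter> R = {} \<and> card L = card R"

text \<open>\<Pi>_LR: bijections VH \<rightarrow> VG mapping LH onto LG and RH onto RG
(made canonical outside VH via extensional).\<close>
definition Pi_LR :: "nat set \<Rightarrow> nat set \<Rightarrow> nat set \<Rightarrow> nat set \<Rightarrow> nat set \<Rightarrow> nat set
    \<Rightarrow> (nat \<Rightarrow> nat) set" where
  "Pi_LR VH LH RH VG LG RG =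
     {\<pi> \<in> extensional VH. bij_betw \<pi> VH VG \<and> \<pi> ` LH = LG \<and> \<pi> ` RH = RG}"

definition boxplus :: "(nat \<times> nat) set \<Rightarrow> (nat \<Rightarrow> nat) \<Rightarrow> (nat \<times> nat) set \<Rightarrow> (nat \<times> nat) set" where
  "boxplus EG \<pi> EH = EG \<union> {(\<pi> x, \<pi> y) | x y. (x, y) \<in> EH}"

text \<open>L' is a possible output of the sorting algorithm: k vertices of smallest degree
(ties broken arbitrarily).\<close>
definition smallest_degree_set :: "nat set \<Rightarrow> (nat \<times> nat) set \<Rightarrow> nat \<Rightarrow> nat set \<Rightarrow> bool" where
  "smallest_degree_set V E k L' \<longleftrightarrow> L' \<subseteq> V \<and> card L' = k \<and>
     (\<forall>u\<in>L'. \<forall>v\<in>V - L'. deg E u \<le> deg E v)"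

definition cut_edges :: "(nat \<times> nat) set \<Rightarrow> nat set \<Rightarrow> nat set \<Rightarrow> nat" where
  "cut_edges E S T = card (E \<inter> (S \<times> T))"

definition balanced_cut :: "real \<Rightarrow> nat \<Rightarrow> nat set \<Rightarrow> nat set \<Rightarrow> bool" where
  "balanced_cut b n S T \<longleftrightarrow> real (card S) \<ge> b * real n \<and> real (card T) \<ge> b * real n"

end

theory Submission
imports Defs
begin

text \<open>Once n \<ge> 6\<alpha>, the cut bound holds for every \<pi>, so the failure probability vanishes.
At least n/\<alpha> vertices have G-degree below \<alpha>d, and adding H contributes at most 2|E_H| \<le> 2dn
to their total degree in F, so their average F-degree is at most 3\<alpha>d. Hence at least half of
them, i.e. at least n/(2\<alpha>) > |L'| vertices, have F-degree at most 6\<alpha>d. As L' consists of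
vertices of smallest degree, every vertex of L' has degree at most 6\<alpha>d, and the cut has at
most 6\<alpha>dn edges. Balance follows from |L'| = \<lceil>n/(3\<alpha>)\<rceil> alone.\<close>

lemma deg_eq_card_Image: "deg E u = card (E `` {u})"
  by (simp add: deg_def Image_singleton)

lemma deg_Un_le: "deg (A \<union> B) u \<le> deg A u + deg B u"
  unfolding deg_eq_card_Image Un_Image by (rule card_Un_le)

lemma sum_deg_eq_card_edges_from:
  assumes "finite E" "finite S"
  shows "(\<Sum>u\<in>S. deg E u) = card (E \<inter> S \<times> UNIV)"
proof -
  have "E \<inter> S \<times> UNIV = (SIGMA u:S. E `` {u})" by auto
  then show ?thesis
    using assms by (simp add: deg_eq_card_Image card_SigmaI finite_Image)
qed

lemma cut_edges_le_sum_deg: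
  assumes "finite E" "finite S"
  shows "cut_edges E S T \<le> (\<Sum>u\<in>S. deg E u)"
  unfolding cut_edges_def sum_deg_eq_card_edges_from[OF assms]
  using assms(1) by (intro card_mono) auto

lemma boxplus_eq_Un_image: "boxplus EG \<pi> EH = EG \<union> map_prod \<pi> \<pi> ` EH"
  unfolding boxplus_def by auto

lemma simple_graph_finite_edges: "simple_graph V E \<Longrightarrow> finite E"
  unfolding simple_graph_def by (meson finite_SigmaI finite_subset)

lemma card_le_twice_card_le_twice_average:
  fixes f :: "'a \<Rightarrow> real" and c :: real
  assumes "finite S" "c > 0" "\<forall>x\<in>S. f x \<ge> 0" "sum f S \<le> c * card S"
  shows "card S \<le> 2 * card {x\<in>S. f x \<le> 2 * c}"
proof -
  define B where "B = {x\<in>S. 2 * c < f x}"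
  have "card B * (2 * c) = (\<Sum>x\<in>B. 2 * c)" by simp
  also have "\<dots> \<le> (\<Sum>x\<in>B. f x)" by (intro sum_mono) (simp add: B_def less_imp_le)
  also have "\<dots> \<le> sum f S"
    using assms(1,3) by (intro sum_mono2) (auto simp: B_def)
  finally have "real (2 * card B) * c \<le> real (card S) * c"
    using assms(4) by (simp add: algebra_simps)
  then have "2 * card B \<le> card S"
    using assms(2) by (simp only: mult_le_cancel_right_pos of_nat_le_iff)
  moreover have "card S = card {x\<in>S. f x \<le> 2 * c} + card B"
  proof -
    have "S = {x\<in>S. f x \<le> 2 * c} \<union> B" "{x\<in>S. f x \<le> 2 * c} \<inter> B = {}"
      unfolding B_def by auto
    then show ?thesis using assms(1) by (metis card_Un_disjoint finite_Un)
  qed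
  ultimately show ?thesis by linarith
qed

lemma smallest_degree_set_deg_le:
  assumes "smallest_degree_set V E k L'" "finite V" "M \<subseteq> V" "k < card M"
    and "\<forall>v\<in>M. real (deg E v) \<le> D" "u \<in> L'"
  shows "real (deg E u) \<le> D"
proof -
  have L': "L' \<subseteq> V" "card L' = k" "\<forall>u\<in>L'. \<forall>v\<in>V - L'. deg E u \<le> deg E v"
    using assms(1) unfolding smallest_degree_set_def by auto
  have "finite L'" using L'(1) assms(2) by (rule finite_subset)
  then have "\<not> M \<subseteq> L'" using L'(2) assms(4) by (metis card_mono leD)
  then obtain v where "v \<in> M" "v \<notin> L'" by blast
  then have "deg E u \<le> deg E v" using L'(3) assms(3,6) by blast
  then show ?thesis using assms(5) \<open>v \<in> M\<close> by (meson of_nat_le_iff order_trans)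
qed

lemma sum_deg_boxplus_le:
  assumes "finite EG" "finite EH" "finite S"
  shows "(\<Sum>u\<in>S. deg (boxplus EG \<pi> EH) u) \<le> (\<Sum>u\<in>S. deg EG u) + card EH"
proof -
  let ?H = "map_prod \<pi> \<pi> ` EH"
  have "(\<Sum>u\<in>S. deg (boxplus EG \<pi> EH) u) \<le> (\<Sum>u\<in>S. deg EG u + deg ?H u)"
    unfolding boxplus_eq_Un_image by (intro sum_mono deg_Un_le)
  also have "\<dots> = (\<Sum>u\<in>S. deg EG u) + (\<Sum>u\<in>S. deg ?H u)"
    by (rule sum.distrib)
  also have "(\<Sum>u\<in>S. deg ?H u) \<le> card ?H"
    using assms by (simp add: sum_deg_eq_card_edges_from card_mono)
  also have "card ?H \<le> card EH"
    using assms(2) by (rule card_image_le)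
  finally show ?thesis by simp
qed

lemma half_partition_card_eq:
  "half_partition V L R \<Longrightarrow> finite V \<Longrightarrow> card V = 2 * card L"
  unfolding half_partition_def by (metis card_Un_disjoint finite_Un mult_2)

lemma nat_ceiling_bounds:
  fixes x :: real
  assumes "x \<ge> 0"
  shows "x \<le> real (nat \<lceil>x\<rceil>)" "real (nat \<lceil>x\<rceil>) < x + 1"
  using assms by linarith+

lemma balanced_cut_if_card_ceiling:
  fixes \<alpha> :: real
  assumes "\<alpha> \<ge> 1" "finite V" "card V = n" "n \<noteq> 1" "L' \<subseteq> V"
    and "card L' = nat \<lceil>real n / (3 * \<alpha>)\<rceil>"
  shows "balanced_cut (min (1 / (3 * \<alpha>)) (1 / 6)) n L' (V - L')"
proof -
  let ?k = "real (card L')"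
  have k: "real n / (3 * \<alpha>) \<le> ?k" "?k < real n / (3 * \<alpha>) + 1"
    using nat_ceiling_bounds[of "real n / (3 * \<alpha>)"] assms(1,6) by auto
  have "real n / (3 * \<alpha>) \<le> real n / 3"
    using assms(1) by (intro divide_left_mono) auto
  then have "real n / 6 \<le> real n - ?k"
    using k(2) assms(4) by (cases "n = 0") auto
  moreover have "card (V - L') = n - card L'" "card L' \<le> n"
    using assms(2,3,5) by (auto simp: card_Diff_subset finite_subset card_mono)
  moreover have "min (1 / (3 * \<alpha>)) (1 / 6) * real n \<le> 1 / (3 * \<alpha>) * real n"
    "min (1 / (3 * \<alpha>)) (1 / 6) * real n \<le> 1 / 6 * real n"
    by (intro mult_right_mono; simp)+
  ultimately show ?thesis
    unfolding balanced_cut_def using k(1) by (auto simp: of_nat_diff)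
qed

lemma card_low_degree_boxplus_ge:
  fixes \<alpha> d :: real
  assumes "\<alpha> \<ge> 1" "d > 0" "finite VG" "finite EG" "finite EH" "card VG = n"
    and "real (card EH) \<le> 2 * d * real n"
    and "real (card {u\<in>VG. real (deg EG u) < \<alpha> * d}) \<ge> real n / \<alpha>"
  shows "real n / (2 * \<alpha>) \<le> real (card {u\<in>VG. real (deg (boxplus EG \<pi> EH) u) \<le> 6 * \<alpha> * d})"
proof -
  define S where "S = {u\<in>VG. real (deg EG u) < \<alpha> * d}"
  define M where "M = {u\<in>S. real (deg (boxplus EG \<pi> EH) u) \<le> 2 * (3 * \<alpha> * d)}"
  have "finite S" using assms(3) by (simp add: S_def)
  have n_le: "real n \<le> \<alpha> * real (card S)"
    using assms(1,8) by (simp add: S_def divide_le_eq mult.commute)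
  have "(\<Sum>u\<in>S. real (deg (boxplus EG \<pi> EH) u)) \<le> (\<Sum>u\<in>S. real (deg EG u)) + real (card EH)"
    using sum_deg_boxplus_le[OF assms(4,5) \<open>finite S\<close>, of \<pi>]
    by (simp flip: of_nat_sum of_nat_add)
  also have "\<dots> \<le> (\<Sum>u\<in>S. \<alpha> * d) + 2 * d * real n"
    using assms(7) by (intro add_mono sum_mono) (simp_all add: S_def less_imp_le)
  also have "\<dots> \<le> real (card S) * (\<alpha> * d) + 2 * d * (\<alpha> * real (card S))"
    using n_le assms(2) by (intro add_mono mult_left_mono) simp_all
  finally have "(\<Sum>u\<in>S. real (deg (boxplus EG \<pi> EH) u)) \<le> 3 * \<alpha> * d * real (card S)"
    by (simp add: algebra_simps)
  then have "card S \<le> 2 * card M"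
    unfolding M_def using assms(1,2) \<open>finite S\<close>
    by (intro card_le_twice_card_le_twice_average) auto
  then have "\<alpha> * real (card S) \<le> \<alpha> * (2 * real (card M))"
    using assms(1) by (intro mult_left_mono) simp_all
  then have "real n \<le> \<alpha> * (2 * real (card M))"
    using n_le by linarith
  then have "real n / (2 * \<alpha>) \<le> real (card M)"
    using assms(1) by (simp add: field_simps)
  also have "card M \<le> card {u\<in>VG. real (deg (boxplus EG \<pi> EH) u) \<le> 6 * \<alpha> * d}"
    using assms(3) by (intro card_mono) (auto simp: M_def S_def)
  finally show ?thesis by simp
qed

lemma cut_edges_boxplus_le:
  fixes \<alpha> d :: real
  assumes "\<alpha> \<ge> 1" "d > 0" "finite VG" "finite EG" "finite EH" "card VG = n"
    and "real n \<ge> 6 * \<alpha>" "real (card EH) \<le> 2 * d * real n"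
    and "real (card {u\<in>VG. real (deg EG u) < \<alpha> * d}) \<ge> real n / \<alpha>"
    and L': "smallest_degree_set VG (boxplus EG \<pi> EH) (nat \<lceil>real n / (3 * \<alpha>)\<rceil>) L'"
  shows "real (cut_edges (boxplus EG \<pi> EH) L' (VG - L')) \<le> 6 * \<alpha> * d * real n"
proof -
  define F where "F = boxplus EG \<pi> EH"
  have fin: "finite F" "finite L'"
    using assms(3,4,5) L' finite_subset[of L' VG]
    by (auto simp: F_def boxplus_eq_Un_image smallest_degree_set_def)
  have "real n / (3 * \<alpha>) + 1 \<le> real n / (2 * \<alpha>)"
    using assms(1,7) by (simp add: field_simps)
  then have many_low: "nat \<lceil>real n / (3 * \<alpha>)\<rceil> < card {u\<in>VG. real (deg F u) \<le> 6 * \<alpha> * d}"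
    using nat_ceiling_bounds(2)[of "real n / (3 * \<alpha>)"] assms(1)
      card_low_degree_boxplus_ge[OF assms(1-6,8,9), of \<pi>]
    unfolding F_def by simp
  have deg_L': "real (deg F u) \<le> 6 * \<alpha> * d" if "u \<in> L'" for u
    using smallest_degree_set_deg_le[OF L'[folded F_def] assms(3) _ many_low _ that] by auto
  have "real (cut_edges F L' (VG - L')) \<le> (\<Sum>u\<in>L'. real (deg F u))"
    using cut_edges_le_sum_deg[OF fin] by (simp flip: of_nat_sum)
  also have "\<dots> \<le> real (card L') * (6 * \<alpha> * d)"
    using sum_mono[OF deg_L'] by simp
  also have "\<dots> \<le> real n * (6 * \<alpha> * d)"
  proof -
    have "card L' \<le> n"
      using assms(3,6) L' card_mono[of VG L'] by (simp add: smallest_degree_set_def)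
    then show ?thesis using assms(1,2) by (intro mult_right_mono) simp_all
  qed
  finally show ?thesis unfolding F_def by (simp add: algebra_simps)
qed

lemma average_degree_bounds:
  fixes C :: real
  assumes "C \<ge> 1" "n \<ge> 3" "d = max (2 * real (num_edges E) / real n) (C * ln (real n) ^ 3)"
  shows "d \<ge> 1" "real (card E) \<le> 2 * d * real n"
proof -
  have "1 \<le> ln (real n)"
    using assms(2) exp_le by (simp add: ln_ge_iff)
  then have "1 * 1 \<le> C * ln (real n) ^ 3"
    using assms(1) by (intro mult_mono one_le_power) simp_all
  then show d: "d \<ge> 1" using assms(3) by linarith
  have "2 * real (num_edges E) / real n \<le> d" using assms(3) by simp
  then have "2 * real (num_edges E) \<le> d * real n"
    using assms(2) by (simp add: divide_le_eq)
  moreover have "card E \<le> 2 * num_edges E + 1" unfolding num_edges_def by simp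
  moreover have "1 * 1 \<le> d * real n" using d assms(2) by (intro mult_mono) simp_all
  ultimately show "real (card E) \<le> 2 * d * real n" by linarith
qed

lemma cut_edges_boxplus_le_of_density:
  fixes \<alpha> C :: real
  assumes "\<alpha> \<ge> 1" "C \<ge> 1" "real n \<ge> 6 * \<alpha>" "finite VG" "finite EG" "finite EH" "card VG = n"
    and "d = max (2 * real (num_edges EH) / real n) (C * ln (real n) ^ 3)"
    and "real (card {u\<in>VG. real (deg EG u) < \<alpha> * d}) \<ge> real n / \<alpha>"
    and "smallest_degree_set VG (boxplus EG \<pi> EH) (nat \<lceil>real n / (3 * \<alpha>)\<rceil>) L'"
  shows "real (cut_edges (boxplus EG \<pi> EH) L' (VG - L')) \<le> 6 * \<alpha> * d * real n"
proof -
  have "n \<ge> 3" using assms(1,3) by linarith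
  from average_degree_bounds[OF assms(2) this assms(8)] show ?thesis
    using assms by (intro cut_edges_boxplus_le) auto
qed

theorem lemma12:
  fixes \<alpha> :: real
  assumes "\<alpha> \<ge> 1"
  shows "\<exists>b>0. \<exists>C0. \<forall>C\<ge>C0. \<exists>K. \<exists>\<delta> :: nat \<Rightarrow> real. (\<delta> \<longlonglongrightarrow> 0) \<and>
    (\<forall>n VG LG RG EG VH LH RH EH.
       card VG = n \<longrightarrow> card VH = n \<longrightarrow>
       simple_graph VG EG \<longrightarrow> simple_graph VH EH \<longrightarrow>
       half_partition VG LG RG \<longrightarrow> half_partition VH LH RH \<longrightarrow>
       (let d = max (2 * real (num_edges EH) / real n) (C * (ln (real n)) ^ 3);
            k = nat \<lceil>real n / (3 * \<alpha>)\<rceil>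
        in real (card {u \<in> VG. real (deg EG u) < \<alpha> * d}) \<ge> real n / \<alpha> \<longrightarrow>
           (\<forall>\<pi> \<in> Pi_LR VH LH RH VG LG RG. \<forall>L'.
              smallest_degree_set VG (boxplus EG \<pi> EH) k L' \<longrightarrow>
              balanced_cut b n L' (VG - L')) \<and>
           measure (pmf_of_set (Pi_LR VH LH RH VG LG RG))
             {\<pi>. \<exists>L'. smallest_degree_set VG (boxplus EG \<pi> EH) k L' \<and>
                   real (cut_edges (boxplus EG \<pi> EH) L' (VG - L')) > K * d * real n}
           \<le> \<delta> n))"
proof -
  define N0 :: nat where "N0 = nat \<lceil>6 * \<alpha>\<rceil>"
  define \<delta> :: "nat \<Rightarrow> real" where "\<delta> n = (if n < N0 then 1 else 0)" for n
  have \<delta>: "\<delta> \<longlonglongrightarrow> 0"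
    by (rule tendsto_eventually, rule eventually_sequentiallyI[of N0]) (simp add: \<delta>_def)
  have large: "real n \<ge> 6 * \<alpha>" if "N0 \<le> n" for n
    using that by (simp add: N0_def)
  have b: "min (1 / (3 * \<alpha>)) (1 / 6) > 0" using assms by simp
  show ?thesis unfolding Let_def
  proof (rule exI[of _ "min (1 / (3 * \<alpha>)) (1 / 6)"], intro conjI b,
      rule exI[of _ 1], intro allI impI, rule exI[of _ "6 * \<alpha>"], rule exI[of _ \<delta>],
      intro conjI \<delta> allI impI ballI)
    fix C n VG LG RG EG VH LH RH EH \<pi> L'
    assume "card VG = n" "simple_graph VG EG" "half_partition VG LG RG"
      and "smallest_degree_set VG (boxplus EG \<pi> EH) (nat \<lceil>real n / (3 * \<alpha>)\<rceil>) L'"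
    then show "balanced_cut (min (1 / (3 * \<alpha>)) (1 / 6)) n L' (VG - L')"
      using half_partition_card_eq
      by (intro balanced_cut_if_card_ceiling assms) (auto simp: simple_graph_def smallest_degree_set_def)
  next
    fix C n VG LG RG EG VH LH RH EH
    define d where "d = max (2 * real (num_edges EH) / real n) (C * ln (real n) ^ 3)"
    assume "1 \<le> C" "card VG = n" "simple_graph VG EG" "simple_graph VH EH"
      and "real n / \<alpha> \<le> real (card {u \<in> VG. real (deg EG u) < \<alpha> * d})"
    then have cut_bound: "real (cut_edges (boxplus EG \<pi> EH) L' (VG - L')) \<le> 6 * \<alpha> * d * real n"
      if "N0 \<le> n" "smallest_degree_set VG (boxplus EG \<pi> EH) (nat \<lceil>real n / (3 * \<alpha>)\<rceil>) L'"
      for \<pi> L'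
      using that assms d_def large
      by (intro cut_edges_boxplus_le_of_density[where C = C])
        (auto simp: simple_graph_def simple_graph_finite_edges)
    show "measure (pmf_of_set (Pi_LR VH LH RH VG LG RG))
        {\<pi>. \<exists>L'. smallest_degree_set VG (boxplus EG \<pi> EH) (nat \<lceil>real n / (3 * \<alpha>)\<rceil>) L' \<and>
          6 * \<alpha> * d * real n < real (cut_edges (boxplus EG \<pi> EH) L' (VG - L'))} \<le> \<delta> n"
      (is "measure _ ?bad \<le> _")
    proof (cases "n < N0")
      case True
      then show ?thesis by (simp add: \<delta>_def measure_pmf.prob_le_1)
    next
      case False
      then have "?bad = {}" using cut_bound by (force simp: not_less)
      with False show ?thesis by (simp only: measure_empty \<delta>_def) simp
    qed
  qed
qed

end
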